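(* Let $n<0$ and $p,m,N\geq1$ be integers with $\gcd(n,m)=1$. Let $a_1,\dots,a_N$ be pairwise distinct complex numbers, $\theta_1,\dots,\theta_N\in\mathbb{C}$, $c_j^\nu\in\mathbb{C}$ for $j=1,\dots,p-1$, $\nu=1,\dots,N$, and $\beta_k^{(i)}=\theta_i-\frac{(k-1)n}{m}$. For $J$ a multiple of $m$ with $J\geq m$, $\nu,i\in\{1,\dots,N\}$, set $$\rho_{\nu,i}^{(J)}=m\!\!\sum_{k_1+\dots+k_N=J|n|/m-1}\frac{(-1)^{k_\nu}}{(a_\nu-a_i)^{k_\nu+1}}\prod_{h=1,h\neq\nu}^N\frac{\binom{-J|n|/m}{k_h}}{(a_\nu-a_h)^{k_h+J|n|/m}}\quad(i\neq\nu),$$ $$\rho_{\nu,\nu}^{(J)}=m\!\!\sum_{\substack{(k_h)_{h\neq\nu}\\ \sum_{h\neq\nu}k_h=J|n|/m}}\ \prod_{h=1,h\neq\nu}^N\frac{\binom{-J|n|/m}{k_h}}{(a_\nu-a_h)^{k_h+J|n|/m}},$$ sums over nonnegative integers. Let $B^{(1)},\dots,B^{(N)}$ be the upper triangular $p\times p$ matrices with $B^{(i)}_{kk}=\beta_k^{(i)}$, $B^{(i)}_{kl}=0$ if $l<k$ or if $l>k$ and $(l-k)/m\notin\mathbb{Z}$, and $B^{(i)}_{kl}=\sum_{\nu=1}^N c^\nu_{l-k}\,\rho^{(l-k)}_{\nu,i}$ if $l>k$ and $(l-k)/m\in\mathbb{Z}$. For $j=1,\dots,p-1$ define $$S_j(z)=\frac{-m^2}{jn}\sum_{\nu=1}^N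 c_j^\nu\!\!\sum_{k_1+\dots+k_N=j|n|/m-1}\frac{(-1)^{k_\nu}}{(a_\nu-z)^{k_\nu+1}}\prod_{h=1,h\neq\nu}^N\frac{\binom{-j|n|/m}{k_h}}{(a_\nu-a_h)^{k_h+j|n|/m}}\ \text{ if } j/m\in\mathbb{Z},\qquad S_j(z)=0\ \text{ if } j/m\notin\mathbb{Z}.$$ Let $D=\mathrm{diag}\big(\prod_{i=1}^N(z-a_i)^{\beta_1^{(i)}},\dots,\prod_{i=1}^N(z-a_i)^{\beta_p^{(i)}}\big)$ and let $M$ be upper triangular with $M_{kk}=1$, $M_{kl}=0$ for $l<k$, and for $l>k$ $$M_{kl}=\sum_{q\vdash(l-k)}\prod_{j=1}^{l-k}\frac{S_j^{\sigma_q(j)}}{\sigma_q(j)!}.$$ Then $\Phi=MD$ solves the Fuchsian system $\frac{\mathrm{d}\Phi}{\mathrm{d}z}=\sum_{i=1}^N\frac{B^{(i)}}{z-a_i}\Phi$ on $\mathbb{C}\setminus\{a_1,\dots,a_N\}$.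
   Context: Generalized binomial coefficients: $\binom{\beta}{j}=\frac{\beta(\beta-1)\cdots(\beta-j+1)}{j!}$ for real $\beta$ and $j\in\mathbb{N}$, $\binom{\beta}{0}=1$. In the paper the quantities $\rho^{(J)}_{\nu,i}$ are the residues at the ramification point $(a_\nu,0)$ of the meromorphic differential $w^{Jn}\mathrm{d}\zeta/(\zeta-a_i)$ on the compact Riemann surface of $w^m=\prod_{i=1}^N(\zeta-a_i)$. $q\vdash(l-k)$ ranges over partitions of $l-k$, and $\sigma_q(j)$ is the number of parts of $q$ equal to $j$. Powers $(z-a_i)^\beta$ are understood via a chosen branch and analytic continuation. *)

theory Defs
  imports "HOL-Complex_Analysis.Complex_Analysis" "HOL-Library.Multiset"
begin

text \<open>Indices: points a 1 .. a N, matrices indexed by 1..p.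
  c j \<nu> stands for c_j^\<nu>.\<close>

definition comps :: "nat set \<Rightarrow> nat \<Rightarrow> (nat \<Rightarrow> nat) set" where
  "comps I K = {k. (\<forall>h. h \<notin> I \<longrightarrow> k h = 0) \<and> (\<Sum>h\<in>I. k h) = K}"

text \<open>Partitions of d, as multisets of positive parts; sigma_q(j) = count q j.\<close>
definition partitions :: "nat \<Rightarrow> nat multiset set" where
  "partitions d = {q. (\<forall>j\<in>#q. 0 < j) \<and> sum_mset q = d}"

definition Jnm :: "int \<Rightarrow> nat \<Rightarrow> nat \<Rightarrow> nat" where
  "Jnm n m J = (J * nat \<bar>n\<bar>) div m"

definition beta :: "int \<Rightarrow> nat \<Rightarrow> (nat \<Rightarrow> complex) \<Rightarrow> nat \<Rightarrow> nat \<Rightarrow> complex" where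
  "beta n m \<theta> i k = \<theta> i - of_nat (k - 1) * of_int n / of_nat m"

definition prodfac :: "int \<Rightarrow> nat \<Rightarrow> nat \<Rightarrow> (nat \<Rightarrow> complex) \<Rightarrow> nat \<Rightarrow> nat \<Rightarrow> (nat \<Rightarrow> nat) \<Rightarrow> complex" where
  "prodfac n m N a J \<nu> k =
     (\<Prod>h\<in>{1..N} - {\<nu>}. ((- of_nat (Jnm n m J)) gchoose (k h))
        / (a \<nu> - a h) ^ (k h + Jnm n m J))"

definition rho :: "int \<Rightarrow> nat \<Rightarrow> nat \<Rightarrow> (nat \<Rightarrow> complex) \<Rightarrow> nat \<Rightarrow> nat \<Rightarrow> nat \<Rightarrow> complex" where
  "rho n m N a J \<nu> i =
     (if i \<noteq> \<nu> then
        of_nat m * (\<Sum>k\<in>comps {1..N} (Jnm n m J - 1).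
           (-1) ^ (k \<nu>) / (a \<nu> - a i) ^ (k \<nu> + 1) * prodfac n m N a J \<nu> k)
      else
        of_nat m * (\<Sum>k\<in>comps ({1..N} - {\<nu>}) (Jnm n m J). prodfac n m N a J \<nu> k))"

definition Bmat :: "int \<Rightarrow> nat \<Rightarrow> nat \<Rightarrow> (nat \<Rightarrow> complex) \<Rightarrow> (nat \<Rightarrow> complex)
    \<Rightarrow> (nat \<Rightarrow> nat \<Rightarrow> complex) \<Rightarrow> nat \<Rightarrow> nat \<Rightarrow> nat \<Rightarrow> complex" where
  "Bmat n m N a \<theta> c i k l =
     (if k = l then beta n m \<theta> i k
      else if k < l \<and> m dvd (l - k) then
        (\<Sum>\<nu>=1..N. c (l - k) \<nu> * rho n m N a (l - k) \<nu> i)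
      else 0)"

definition Sfun :: "int \<Rightarrow> nat \<Rightarrow> nat \<Rightarrow> (nat \<Rightarrow> complex) \<Rightarrow> (nat \<Rightarrow> nat \<Rightarrow> complex)
    \<Rightarrow> nat \<Rightarrow> complex \<Rightarrow> complex" where
  "Sfun n m N a c j z =
     (if m dvd j then
        - (of_nat m ^ 2) / (of_nat j * of_int n) *
        (\<Sum>\<nu>=1..N. c j \<nu> *
          (\<Sum>k\<in>comps {1..N} (Jnm n m j - 1).
             (-1) ^ (k \<nu>) / (a \<nu> - z) ^ (k \<nu> + 1) * prodfac n m N a j \<nu> k))
      else 0)"

definition Mmat :: "int \<Rightarrow> nat \<Rightarrow> nat \<Rightarrow> (nat \<Rightarrow> complex) \<Rightarrow> (nat \<Rightarrow> nat \<Rightarrow> complex)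
    \<Rightarrow> nat \<Rightarrow> nat \<Rightarrow> complex \<Rightarrow> complex" where
  "Mmat n m N a c k l z =
     (if k = l then 1
      else if k < l then
        (\<Sum>q\<in>partitions (l - k).
           \<Prod>j=1..l - k. Sfun n m N a c j z ^ count q j / fact (count q j))
      else 0)"

text \<open>Diagonal matrix D, with (z - a_i)^beta := exp (beta * L i z) for a chosen
  branch L i of log (z - a_i).\<close>
definition Dmat :: "int \<Rightarrow> nat \<Rightarrow> nat \<Rightarrow> (nat \<Rightarrow> complex) \<Rightarrow> (nat \<Rightarrow> complex \<Rightarrow> complex)
    \<Rightarrow> nat \<Rightarrow> nat \<Rightarrow> complex \<Rightarrow> complex" where
  "Dmat n m N \<theta> L k l z =
     (if k = l then (\<Prod>i=1..N. exp (beta n m \<theta> i k * L i z)) else 0)"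

definition Phi :: "int \<Rightarrow> nat \<Rightarrow> nat \<Rightarrow> nat \<Rightarrow> (nat \<Rightarrow> complex) \<Rightarrow> (nat \<Rightarrow> complex)
    \<Rightarrow> (nat \<Rightarrow> nat \<Rightarrow> complex) \<Rightarrow> (nat \<Rightarrow> complex \<Rightarrow> complex) \<Rightarrow> nat \<Rightarrow> nat \<Rightarrow> complex \<Rightarrow> complex" where
  "Phi n p m N a \<theta> c L k l z =
     (\<Sum>r=1..p. Mmat n m N a c k r z * Dmat n m N \<theta> L r l z)"

end

theory Submission
  imports Defs "HOL-Computational_Algebra.Formal_Power_Series"
begin

(* Since M is upper triangular with M_kl = E_(l-k), where E_d is the coefficient of x^d in
   exp (sum_j S_j x^j), and D is diagonal, Phi_kl = E_(l-k) D_l.  The coefficients satisfy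
   E_d' = sum_j S_j' E_(d-j) and d E_d = sum_j j S_j E_(d-j), and beta_l = beta_k - (l-k) n/m.
   Hence the system reduces to the scalar identities
     S_j' = sum_i B^(i)_(k,k+j) / (z - a_i) + j (n/m) sigma S_j,   sigma = sum_i 1 / (z - a_i).
   For m dividing j, S_j is a combination of the principal parts P_nu at a_nu of
   F(w) = prod_h (w - a_h)^(-K), K = j|n|/m.  As F'/F = -K sigma, the function
   P_nu' + K sigma P_nu is rational, vanishes at infinity and has only simple poles: residue
   K P_nu(a_h) at a_h and -K q_K at a_nu, with q_K the constant Laurent coefficient of F at a_nu.
   These residues are the rho's.  The partial fraction identity is proved algebraically: the
   Taylor coefficients of (w - a_nu)^K F(w) at a_nu satisfy Newton's recurrence, which is read
   off from the logarithmic derivative of this product as a formal power series. *)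

section \<open>Compositions and products of power series\<close>

lemma comps_empty: "comps {} r = (if r = 0 then {\<lambda>_. 0} else {})"
  unfolding comps_def by auto

lemma finite_comps:
  assumes "finite I"
  shows "finite (comps I r)"
proof -
  have "k h \<le> r" if "k \<in> comps I r" "h \<in> I" for k h
    using that assms member_le_sum[of h I k] by (simp add: comps_def)
  then have "comps I r \<subseteq> {k. \<forall>h. (h \<in> I \<longrightarrow> k h \<in> {..r}) \<and> (h \<notin> I \<longrightarrow> k h = 0)}"
    by (auto simp: comps_def)
  then show ?thesis
    by (rule finite_subset) (intro finite_set_of_finite_funs assms finite_atMost)
qed

lemma sum_comps_insert:
  assumes "finite I" "x \<notin> I"
  shows "(\<Sum>k\<in>comps (insert x I) r. H k) = (\<Sum>b\<le>r. \<Sum>k\<in>comps I (r - b). H (k(x := b)))"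
proof -
  have "(\<Sum>b\<le>r. \<Sum>k\<in>comps I (r - b). H (k(x := b)))
      = (\<Sum>(b, k)\<in>(SIGMA b:{..r}. comps I (r - b)). H (k(x := b)))"
    by (rule sum.Sigma) (auto intro: finite_comps assms)
  also have "\<dots> = (\<Sum>k\<in>comps (insert x I) r. H k)"
  proof (rule sum.reindex_bij_witness[of _ "\<lambda>k. (k x, k(x := 0))" "\<lambda>(b, k). k(x := b)"])
    fix k assume k: "k \<in> comps (insert x I) r"
    then have "k x + (\<Sum>h\<in>I. k h) = r"
      using assms by (simp add: comps_def)
    moreover have "(\<Sum>h\<in>I. (k(x := 0)) h) = (\<Sum>h\<in>I. k h)"
      using assms by (intro sum.cong) auto
    ultimately show "(\<lambda>k. (k x, k(x := 0))) k \<in> (SIGMA b:{..r}. comps I (r - b))"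
      using k by (auto simp: comps_def)
  next
    fix bk assume "bk \<in> (SIGMA b:{..r}. comps I (r - b))"
    moreover obtain b k where "bk = (b, k)" by fastforce
    ultimately have b: "b \<le> r" and k: "k \<in> comps I (r - b)" and bk: "bk = (b, k)" by auto
    have "(\<Sum>h\<in>I. (k(x := b)) h) = (\<Sum>h\<in>I. k h)"
      using assms by (intro sum.cong) auto
    with b k assms show "(\<lambda>(b, k). k(x := b)) bk \<in> comps (insert x I) r"
      by (auto simp: bk comps_def)
    show "(\<lambda>k. (k x, k(x := 0))) ((\<lambda>(b, k). k(x := b)) bk) = bk"
      using k assms by (auto simp: bk comps_def fun_eq_iff)
  qed (auto simp: comps_def fun_eq_iff)
  finally show ?thesis ..
qed

lemma fps_prod_nth:
  fixes F :: "nat \<Rightarrow> 'a::comm_ring_1 fps"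
  assumes "finite I"
  shows "(\<Prod>h\<in>I. F h) $ r = (\<Sum>k\<in>comps I r. \<Prod>h\<in>I. F h $ k h)"
  using assms
proof (induction I arbitrary: r rule: finite_induct)
  case empty
  then show ?case by (simp add: comps_empty)
next
  case (insert x I)
  have "(\<Prod>h\<in>insert x I. F h) $ r = (\<Sum>b\<le>r. F x $ b * (\<Prod>h\<in>I. F h) $ (r - b))"
    using insert by (simp add: fps_mult_nth atLeast0AtMost)
  also have "\<dots> = (\<Sum>b\<le>r. \<Sum>k\<in>comps I (r - b). \<Prod>h\<in>insert x I. F h $ (k(x := b)) h)"
  proof (intro sum.cong refl)
    fix b
    have "(\<Prod>h\<in>I. F h $ (k(x := b)) h) = (\<Prod>h\<in>I. F h $ k h)" for k
      using insert by (intro prod.cong) auto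
    then show "F x $ b * (\<Prod>h\<in>I. F h) $ (r - b)
        = (\<Sum>k\<in>comps I (r - b). \<Prod>h\<in>insert x I. F h $ (k(x := b)) h)"
      using insert by (simp add: sum_distrib_left)
  qed
  also have "\<dots> = (\<Sum>k\<in>comps (insert x I) r. \<Prod>h\<in>insert x I. F h $ k h)"
    using insert by (simp add: sum_comps_insert)
  finally show ?case .
qed

(* The Taylor series of (d + x)^(-K) at 0. *)
definition neg_binomial_fps :: "nat \<Rightarrow> 'a::field_char_0 \<Rightarrow> 'a fps" where
  "neg_binomial_fps K d = Abs_fps (\<lambda>b. ((- of_nat K) gchoose b) / d ^ (b + K))"

definition geometric_tail_fps :: "'a::comm_ring_1 \<Rightarrow> 'a fps" where
  "geometric_tail_fps t = Abs_fps (\<lambda>j. if j = 0 then 0 else t ^ j)"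

lemma neg_binomial_fps_ODE:
  fixes d :: "'a::field_char_0"
  assumes "d \<noteq> 0"
  shows "(fps_const d + fps_X) * fps_deriv (neg_binomial_fps K d) = - of_nat K * neg_binomial_fps K d"
proof (rule fps_ext)
  fix r
  define e where "e b = ((- of_nat K :: 'a) gchoose b) / d ^ (b + K)" for b
  have "of_nat (Suc r) * ((- of_nat K :: 'a) gchoose Suc r) = (- of_nat K - of_nat r) * ((- of_nat K) gchoose r)"
    using gbinomial_mult_1[of "- of_nat K :: 'a" r] by (simp add: algebra_simps)
  moreover have "d * (of_nat (Suc r) * e (Suc r)) = of_nat (Suc r) * ((- of_nat K) gchoose Suc r) / d ^ (r + K)"
    using assms by (simp add: e_def)
  ultimately have rec: "d * (of_nat (Suc r) * e (Suc r)) = (- of_nat K - of_nat r) * e r"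
    by (simp add: e_def)
  have lhs: "((fps_const d + fps_X) * fps_deriv (neg_binomial_fps K d)) $ r
      = d * (of_nat (Suc r) * e (Suc r)) + of_nat r * e r"
    by (cases r) (simp_all add: neg_binomial_fps_def e_def algebra_simps del: of_nat_Suc)
  have rhs: "(- of_nat K * neg_binomial_fps K d) $ r = - of_nat K * e r"
    by (simp add: neg_binomial_fps_def e_def flip: fps_of_nat)
  show "((fps_const d + fps_X) * fps_deriv (neg_binomial_fps K d)) $ r = (- of_nat K * neg_binomial_fps K d) $ r"
    unfolding lhs rhs rec by (simp add: algebra_simps)
qed

lemma geometric_tail_fps_mult:
  fixes d :: "'a::field"
  assumes "d \<noteq> 0"
  shows "(fps_const d + fps_X) * geometric_tail_fps (- 1 / d) = - fps_X"
proof -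
  define t where "t = - 1 / d"
  have dt: "d * (t * x) = - x" for x
    using assms by (simp add: t_def)
  have "(fps_const d + fps_X) * geometric_tail_fps t = - fps_X"
  proof (rule fps_ext)
    fix r
    have coeff: "((fps_const d + fps_X) * geometric_tail_fps t) $ r
        = d * geometric_tail_fps t $ r + (if r = 0 then 0 else geometric_tail_fps t $ (r - 1))"
      by (simp add: distrib_right)
    consider "r = 0" | "r = 1" | s where "r = Suc (Suc s)"
      by (metis One_nat_def not0_implies_Suc)
    then show "((fps_const d + fps_X) * geometric_tail_fps t) $ r = (- fps_X :: 'a fps) $ r"
      by cases (use dt[of 1] dt coeff in \<open>simp_all add: geometric_tail_fps_def\<close>)
  qed
  then show ?thesis
    by (simp add: t_def)
qed

lemma neg_binomial_fps_log_deriv: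
  fixes d :: "'a::field_char_0"
  assumes "d \<noteq> 0"
  shows "fps_X * fps_deriv (neg_binomial_fps K d) = of_nat K * geometric_tail_fps (- 1 / d) * neg_binomial_fps K d"
proof -
  define F where "F = neg_binomial_fps K d"
  have "(fps_const d + fps_X) * (fps_X * fps_deriv F - of_nat K * geometric_tail_fps (- 1 / d) * F)
      = fps_X * ((fps_const d + fps_X) * fps_deriv F)
        - of_nat K * ((fps_const d + fps_X) * geometric_tail_fps (- 1 / d)) * F"
    by (simp add: algebra_simps)
  also have "\<dots> = 0"
    unfolding F_def neg_binomial_fps_ODE[OF assms] geometric_tail_fps_mult[OF assms] by simp
  finally have "(fps_const d + fps_X) * (fps_X * fps_deriv F - of_nat K * geometric_tail_fps (- 1 / d) * F) = 0" .
  moreover have "fps_const d + fps_X \<noteq> 0"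
    using assms fps_nonzero_nth[of "fps_const d + fps_X"] by auto
  ultimately show ?thesis
    unfolding F_def by simp
qed

lemma fps_X_deriv_prod:
  fixes F P :: "'b \<Rightarrow> 'a::comm_ring_1 fps"
  assumes "finite I" "\<And>h. h \<in> I \<Longrightarrow> fps_X * fps_deriv (F h) = c * P h * F h"
  shows "fps_X * fps_deriv (\<Prod>h\<in>I. F h) = c * (\<Sum>h\<in>I. P h) * (\<Prod>h\<in>I. F h)"
  using assms
proof (induction I rule: finite_induct)
  case (insert x I)
  have "fps_X * fps_deriv (\<Prod>h\<in>insert x I. F h)
      = (fps_X * fps_deriv (F x)) * (\<Prod>h\<in>I. F h) + F x * (fps_X * fps_deriv (\<Prod>h\<in>I. F h))"
    using insert.hyps by (simp add: algebra_simps)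
  then show ?case
    using insert by (simp add: algebra_simps)
qed simp

lemma neg_binomial_prod_newton:
  fixes d :: "'b \<Rightarrow> 'a::field_char_0" and K :: nat
  assumes "finite I" "\<And>h. h \<in> I \<Longrightarrow> d h \<noteq> 0"
  defines "Q \<equiv> \<Prod>h\<in>I. neg_binomial_fps K (d h)"
  shows "of_nat r * Q $ r = of_nat K * (\<Sum>j=1..r. (\<Sum>h\<in>I. (- 1 / d h) ^ j) * Q $ (r - j))"
proof -
  define P where "P = (\<Sum>h\<in>I. geometric_tail_fps (- 1 / d h))"
  have "fps_X * fps_deriv Q = of_nat K * P * Q"
    unfolding Q_def P_def using assms by (intro fps_X_deriv_prod neg_binomial_fps_log_deriv) auto
  moreover have "(fps_X * fps_deriv Q) $ r = of_nat r * Q $ r"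
    by (cases r) (simp_all del: of_nat_Suc)
  moreover have "(of_nat K * P * Q) $ r = of_nat K * (P * Q) $ r"
    by (simp add: mult.assoc flip: fps_of_nat)
  ultimately have "of_nat r * Q $ r = of_nat K * (P * Q) $ r"
    by simp
  then have "of_nat r * Q $ r = of_nat K * (\<Sum>j=0..r. P $ j * Q $ (r - j))"
    by (simp only: fps_mult_nth)
  also have "(\<Sum>j=0..r. P $ j * Q $ (r - j)) = (\<Sum>j=1..r. P $ j * Q $ (r - j))"
    by (rule sum.mono_neutral_right) (auto simp: P_def geometric_tail_fps_def fps_sum_nth)
  finally show ?thesis
    by (simp add: P_def geometric_tail_fps_def fps_sum_nth)
qed

section \<open>Principal parts\<close>

(* The principal part at c of (w - c)^(-K) Q(w - c). *)
definition principal_part :: "nat \<Rightarrow> 'a::field fps \<Rightarrow> 'a \<Rightarrow> 'a \<Rightarrow> 'a" where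
  "principal_part K Q c w = (\<Sum>s<K. Q $ s * (1 / (w - c)) ^ (K - s))"

lemma sum_triangle_reindex:
  fixes f :: "nat \<Rightarrow> nat \<Rightarrow> 'a::comm_monoid_add"
  shows "(\<Sum>r\<le>K. \<Sum>j=1..r. f (r - j) (j - 1)) = (\<Sum>s<K. \<Sum>i<K - s. f s i)"
proof (induction K)
  case (Suc K)
  have "(\<Sum>j=1..Suc K. f (Suc K - j) (j - 1)) = (\<Sum>i\<le>K. f (K - i) i)"
    using sum.shift_bounds_cl_Suc_ivl[of "\<lambda>j. f (Suc K - j) (j - 1)" 0 K] by (simp add: atLeast0AtMost)
  also have "\<dots> = (\<Sum>s\<le>K. f s (K - s))"
    by (rule sum.reindex_bij_witness[of _ "\<lambda>s. K - s" "\<lambda>i. K - i"]) auto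
  finally have diagonal: "(\<Sum>j=1..Suc K. f (Suc K - j) (j - 1)) = (\<Sum>s\<le>K. f s (K - s))" .
  have "(\<Sum>s<Suc K. \<Sum>i<Suc K - s. f s i) = (\<Sum>s<Suc K. (\<Sum>i<K - s. f s i) + f s (K - s))"
    by (intro sum.cong refl) (simp add: Suc_diff_le)
  also have "\<dots> = (\<Sum>s<Suc K. \<Sum>i<K - s. f s i) + (\<Sum>s<Suc K. f s (K - s))"
    by (rule sum.distrib)
  also have "(\<Sum>s<Suc K. \<Sum>i<K - s. f s i) = (\<Sum>s<K. \<Sum>i<K - s. f s i)"
    by simp
  finally show ?case
    using Suc diagonal by (simp add: lessThan_Suc_atMost)
qed simp

(* The algebraic core of neg_binomial_principal_part_has_field_derivative, where
   t h = 1 / (b h - c), u = 1 / (z - c) and y h = 1 / (z - b h), so that y h (t h - u) = t h u. *)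
lemma newton_divided_difference:
  fixes q p :: "nat \<Rightarrow> 'a::comm_ring_1" and t y :: "'b \<Rightarrow> 'a"
  assumes "finite I"
    and newton: "\<And>r. of_nat r * q r = of_nat K * (\<Sum>j=1..r. p j * q (r - j))"
    and power_sums: "\<And>j. p j = (\<Sum>h\<in>I. t h ^ j)"
    and y: "\<And>h. h \<in> I \<Longrightarrow> y h * (t h - u) = t h * u"
  defines "g \<equiv> \<lambda>x. \<Sum>s<K. q s * x ^ (K - s)"
  shows "of_nat K * (\<Sum>h\<in>I. y h * (g (t h) - g u)) = (\<Sum>r\<le>K. of_nat r * q r * u ^ (K - r + 1))"
proof -
  define f where "f s i = p (i + 1) * q s * u ^ (K - s - i)" for s i
  have "y h * (g (t h) - g u) = (\<Sum>s<K. \<Sum>i<K - s. q s * t h ^ (i + 1) * u ^ (K - s - i))"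
    if h: "h \<in> I" for h
  proof -
    have "g (t h) - g u = (\<Sum>s<K. q s * (t h ^ (K - s) - u ^ (K - s)))"
      by (simp add: g_def sum_subtractf right_diff_distrib)
    also have "\<dots> = (\<Sum>s<K. q s * ((t h - u) * (\<Sum>i<K - s. u ^ (K - s - Suc i) * t h ^ i)))"
      by (simp add: power_diff_sumr2)
    finally have "y h * (g (t h) - g u)
        = (\<Sum>s<K. q s * (y h * (t h - u)) * (\<Sum>i<K - s. u ^ (K - s - Suc i) * t h ^ i))"
      by (simp add: sum_distrib_left mult_ac)
    also have "\<dots> = (\<Sum>s<K. \<Sum>i<K - s. q s * t h ^ (i + 1) * u ^ (K - s - i))"
      unfolding y[OF h] sum_distrib_left
    proof (intro sum.cong refl)
      fix s i assume "i \<in> {..<K - s}"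
      then have "K - s - i = Suc (K - s - Suc i)"
        by simp
      then show "q s * (t h * u) * (u ^ (K - s - Suc i) * t h ^ i) = q s * t h ^ (i + 1) * u ^ (K - s - i)"
        by (simp add: mult_ac)
    qed
    finally show ?thesis .
  qed
  then have "(\<Sum>h\<in>I. y h * (g (t h) - g u)) = (\<Sum>s<K. \<Sum>i<K - s. f s i)"
    unfolding f_def power_sums
    by (simp add: sum_distrib_left sum_distrib_right mult_ac sum.swap[where A = I])
  also have "\<dots> = (\<Sum>r\<le>K. \<Sum>j=1..r. f (r - j) (j - 1))"
    by (rule sum_triangle_reindex[symmetric])
  also have "\<dots> = (\<Sum>r\<le>K. (\<Sum>j=1..r. p j * q (r - j)) * u ^ (K - r + 1))"
    unfolding f_def sum_distrib_right by (intro sum.cong refl) (simp add: Suc_diff_le)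
  moreover have "of_nat K * ((\<Sum>j=1..r. p j * q (r - j)) * u ^ (K - r + 1)) = of_nat r * q r * u ^ (K - r + 1)" for r
    by (simp only: newton mult.assoc)
  ultimately show ?thesis
    by (simp add: sum_distrib_left)
qed

lemma principal_part_has_field_derivative:
  fixes Q :: "'a::real_normed_field fps"
  assumes "z \<noteq> c"
  shows "(principal_part K Q c has_field_derivative
           - (\<Sum>s<K. of_nat (K - s) * Q $ s * (1 / (z - c)) ^ (K - s + 1))) (at z)"
proof -
  have "((\<lambda>w. (1 / (w - c)) ^ e) has_field_derivative - of_nat e * (1 / (z - c)) ^ (e + 1)) (at z)" for e
  proof -
    have deriv: "((\<lambda>w. (1 / (w - c)) ^ e) has_field_derivative
        of_nat e * (1 / (z - c)) ^ (e - 1) * - ((1 / (z - c)) ^ 2)) (at z)"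
      using assms by (auto intro!: derivative_eq_intros simp: power2_eq_square)
    have "of_nat e * x ^ (e - 1) * - (x ^ 2) = - of_nat e * x ^ (e + 1)" for x :: 'a
      by (cases e) (simp_all add: power2_eq_square algebra_simps)
    then show ?thesis
      using deriv by metis
  qed
  then have "(principal_part K Q c has_field_derivative
      (\<Sum>s<K. Q $ s * (- of_nat (K - s) * (1 / (z - c)) ^ (K - s + 1)))) (at z)"
    unfolding principal_part_def [abs_def] by (intro DERIV_sum DERIV_cmult)
  moreover have "(\<Sum>s<K. Q $ s * (- of_nat (K - s) * x ^ (K - s + 1)))
      = - (\<Sum>s<K. of_nat (K - s) * Q $ s * x ^ (K - s + 1))" for x
    by (simp only: sum_negf[symmetric] mult_minus_left mult_minus_right mult_ac)
  ultimately show ?thesis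
    by metis
qed

lemma neg_binomial_principal_part_has_field_derivative:
  fixes b :: "'b \<Rightarrow> 'a::real_normed_field" and K :: nat
  assumes "finite I" and b: "\<And>h. h \<in> I \<Longrightarrow> b h \<noteq> c"
    and z: "\<And>h. h \<in> I \<Longrightarrow> z \<noteq> b h" "z \<noteq> c"
  defines "Q \<equiv> \<Prod>h\<in>I. neg_binomial_fps K (c - b h)"
  defines "P \<equiv> principal_part K Q c"
  shows "(P has_field_derivative
           of_nat K * ((\<Sum>h\<in>I. (P (b h) - P z) / (z - b h)) - (Q $ K + P z) / (z - c))) (at z)"
proof -
  define u where "u = 1 / (z - c)"
  define t where "t h = 1 / (b h - c)" for h
  define y where "y h = 1 / (z - b h)" for h
  define g where "g x = (\<Sum>s<K. Q $ s * x ^ (K - s))" for x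
  have P_g: "P w = g (1 / (w - c))" for w
    by (simp add: P_def g_def principal_part_def)
  have "- 1 / (c - b h) = t h" if "h \<in> I" for h
    using b[OF that] by (simp add: t_def field_simps)
  then have newton: "of_nat r * Q $ r = of_nat K * (\<Sum>j=1..r. (\<Sum>h\<in>I. t h ^ j) * Q $ (r - j))" for r
    unfolding Q_def using assms(1) b by (subst neg_binomial_prod_newton) auto
  have "y h * (t h - u) = t h * u" if "h \<in> I" for h
    using b[OF that] z(1)[OF that] z(2) by (simp add: y_def t_def u_def field_simps)
  from newton_divided_difference[OF assms(1) newton refl this]
  have divided_difference: "of_nat K * (\<Sum>h\<in>I. (P (b h) - P z) / (z - b h))
      = (\<Sum>s<K. of_nat s * Q $ s * u ^ (K - s + 1)) + of_nat K * Q $ K * u"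
    by (simp add: P_g g_def t_def u_def y_def lessThan_Suc_atMost[symmetric] field_simps)
  have "x / (z - c) = x * u" for x
    by (simp add: u_def)
  then have residue_term: "(Q $ K + P z) / (z - c) = Q $ K * u + (\<Sum>s<K. Q $ s * u ^ (K - s + 1))"
    unfolding P_g u_def[symmetric] by (simp add: g_def distrib_left sum_distrib_left mult_ac)
  have "of_nat K * ((\<Sum>h\<in>I. (P (b h) - P z) / (z - b h)) - (Q $ K + P z) / (z - c))
      = (\<Sum>s<K. of_nat s * Q $ s * u ^ (K - s + 1)) + of_nat K * Q $ K * u
        - of_nat K * (Q $ K * u + (\<Sum>s<K. Q $ s * u ^ (K - s + 1)))"
    unfolding right_diff_distrib divided_difference residue_term ..
  also have "\<dots> = (\<Sum>s<K. (of_nat s - of_nat K) * Q $ s * u ^ (K - s + 1))"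
    by (simp add: algebra_simps sum_distrib_left sum_subtractf)
  also have "\<dots> = - (\<Sum>s<K. of_nat (K - s) * Q $ s * u ^ (K - s + 1))"
    by (simp add: of_nat_diff algebra_simps flip: sum_negf)
  finally show ?thesis
    unfolding P_def u_def by (metis principal_part_has_field_derivative z(2))
qed

lemma minus_one_power_div:
  fixes c w :: "'a::field"
  shows "(- 1) ^ b / (c - w) ^ (b + 1) = - ((1 / (w - c)) ^ (b + 1))"
proof -
  have "(c - w) ^ (b + 1) = ((- 1) * (w - c)) ^ (b + 1)"
    by simp
  also have "\<dots> = (- 1) ^ b * - ((w - c) ^ (b + 1))"
    by (simp only: power_mult_distrib) simp
  finally have "(- 1) ^ b / (c - w) ^ (b + 1) = (- 1) ^ b / ((- 1) ^ b * - ((w - c) ^ (b + 1)))"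
    by simp
  also have "\<dots> = - (1 / (w - c) ^ (b + 1))"
    by (cases "w = c") (simp_all add: field_simps)
  finally show ?thesis
    by (simp add: power_one_over)
qed

lemma sum_comps_eq_principal_part:
  fixes F :: "(nat \<Rightarrow> nat) \<Rightarrow> 'a::field" and Q :: "'a fps"
  assumes "finite I" "\<nu> \<notin> I" "K \<ge> 1"
    and F_upd: "\<And>k b. F (k(\<nu> := b)) = F k"
    and Q: "\<And>s. Q $ s = (\<Sum>k\<in>comps I s. F k)"
  shows "(\<Sum>k\<in>comps (insert \<nu> I) (K - 1). (- 1) ^ k \<nu> / (c - w) ^ (k \<nu> + 1) * F k)
       = - principal_part K Q c w"
proof -
  have "(\<Sum>k\<in>comps (insert \<nu> I) (K - 1). (- 1) ^ k \<nu> / (c - w) ^ (k \<nu> + 1) * F k)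
      = (\<Sum>b\<le>K - 1. - ((1 / (w - c)) ^ (b + 1) * Q $ (K - 1 - b)))"
    unfolding sum_comps_insert[OF assms(1,2)] fun_upd_same F_upd minus_one_power_div
    by (simp add: Q sum_distrib_left sum_negf)
  also have "\<dots> = (\<Sum>s<K. - (Q $ s * (1 / (w - c)) ^ (K - s)))"
    using assms(3) by (intro sum.reindex_bij_witness[of _ "\<lambda>s. K - 1 - s" "\<lambda>b. K - 1 - b"])
      (auto simp: Suc_diff_le mult.commute)
  finally show ?thesis
    by (simp add: principal_part_def sum_negf)
qed

section \<open>Partitions and the exponential series\<close>

definition partition_weight :: "nat set \<Rightarrow> (nat \<Rightarrow> 'a::field_char_0) \<Rightarrow> nat multiset \<Rightarrow> 'a" where
  "partition_weight A S q = (\<Prod>x\<in>A. S x ^ count q x / fact (count q x))"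

(* The coefficient of x^d in exp (sum_j S j x^j). *)
definition exp_series_coeff :: "(nat \<Rightarrow> 'a::field_char_0) \<Rightarrow> nat \<Rightarrow> 'a" where
  "exp_series_coeff S d = (\<Sum>q\<in>partitions d. partition_weight {1..d} S q)"

lemma sum_mset_eq_sum_count:
  fixes q :: "nat multiset"
  assumes "finite A" "set_mset q \<subseteq> A"
  shows "sum_mset q = (\<Sum>x\<in>A. x * count q x)"
  using assms(2)
proof (induction q)
  case (add x q)
  then have "(\<Sum>y\<in>A. y * count (add_mset x q) y) = (\<Sum>y\<in>A. y * count q y + (if y = x then x else 0))"
    by (intro sum.cong) auto
  with add assms(1) show ?case
    by (simp add: sum.distrib)
qed simp

lemma partitions_set_mset:
  assumes "q \<in> partitions d"
  shows "set_mset q \<subseteq> {1..d}"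
proof
  fix x assume x: "x \<in># q"
  then have "x \<le> sum_mset q"
    by (simp add: sum_mset.remove[OF x])
  moreover have "0 < x"
    using x assms by (simp add: partitions_def)
  ultimately show "x \<in> {1..d}"
    using assms by (simp add: partitions_def)
qed

lemma finite_partitions: "finite (partitions d)"
proof (rule finite_subset)
  show "partitions d \<subseteq> (\<Union>n\<le>d. multisets_of_size {1..d} n)"
  proof
    fix q assume q: "q \<in> partitions d"
    have size_le: "size q' \<le> sum_mset q'" if "\<forall>x\<in>#q'. 0 < x" for q' :: "nat multiset"
      using that by (induction q') auto
    have "size q \<le> d"
      using q size_le[of q] unfolding partitions_def by auto
    then show "q \<in> (\<Union>n\<le>d. multisets_of_size {1..d} n)"
      using partitions_set_mset[OF q] by (auto simp: multisets_of_size_def)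
  qed
qed auto

lemma partitions_0: "partitions 0 = {{#}}"
proof (intro equalityI subsetI)
  fix q assume "q \<in> partitions 0"
  then have "set_mset q = {}"
    using partitions_set_mset by force
  then show "q \<in> {{#}}"
    by simp
qed (simp add: partitions_def)

lemma partition_weight_superset:
  assumes "finite B" "A \<subseteq> B" "set_mset q \<subseteq> A"
  shows "partition_weight A S q = partition_weight B S q"
proof -
  have "count q i = 0" if "i \<notin> A" for i
    using that assms(3) by (auto simp: count_eq_zero_iff)
  then show ?thesis
    unfolding partition_weight_def using assms by (intro prod.mono_neutral_left) auto
qed

lemma partition_weight_split:
  assumes "finite A" "x \<in> A"
  shows "partition_weight A S q
    = S x ^ count q x / fact (count q x) * (\<Prod>y\<in>A - {x}. S y ^ count q y / fact (count q y))"
  unfolding partition_weight_def using assms by (simp add: prod.remove)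

lemma partition_weight_remove:
  assumes "finite A" "x \<in> A"
  shows "partition_weight A S (q - {#x#})
    = S x ^ (count q x - 1) / fact (count q x - 1) * (\<Prod>y\<in>A - {x}. S y ^ count q y / fact (count q y))"
proof -
  have "(\<Prod>y\<in>A - {x}. S y ^ count (q - {#x#}) y / fact (count (q - {#x#}) y))
      = (\<Prod>y\<in>A - {x}. S y ^ count q y / fact (count q y))"
    by (intro prod.cong) auto
  then show ?thesis
    using partition_weight_split[OF assms, of S "q - {#x#}"] by simp
qed

lemma count_mult_partition_weight:
  assumes "finite A" "x \<in> A" "x \<in># q"
  shows "of_nat (count q x) * partition_weight A S q = S x * partition_weight A S (q - {#x#})"
proof -
  obtain c where c: "count q x = Suc c"
    using assms(3) by (metis count_greater_zero_iff not0_implies_Suc not_gr0)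
  have "of_nat (Suc c) * (S x ^ Suc c / fact (Suc c)) = S x * (S x ^ c / fact c)"
    by (simp add: field_simps del: of_nat_Suc)
  then show ?thesis
    using partition_weight_split[OF assms(1,2), of S q] partition_weight_remove[OF assms(1,2), of S q] c
    by (simp only: diff_Suc_1 mult.assoc[symmetric])
qed

lemma sum_partitions_remove_part:
  "(\<Sum>q\<in>partitions d. \<Sum>x\<in>set_mset q. F x (q - {#x#})) = (\<Sum>j=1..d. \<Sum>q\<in>partitions (d - j). F j q)"
proof -
  have "(\<Sum>q\<in>partitions d. \<Sum>x\<in>set_mset q. F x (q - {#x#}))
      = (\<Sum>(q, x)\<in>(SIGMA q:partitions d. set_mset q). F x (q - {#x#}))"
    by (rule sum.Sigma) (auto simp: finite_partitions)
  also have "\<dots> = (\<Sum>(j, q)\<in>(SIGMA j:{1..d}. partitions (d - j)). F j q)"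
  proof (rule sum.reindex_bij_witness[of _ "\<lambda>(j, q). (add_mset j q, j)" "\<lambda>(q, x). (x, q - {#x#})"])
    fix qx assume "qx \<in> (SIGMA q:partitions d. set_mset q)"
    then obtain q x where qx: "qx = (q, x)" and q: "q \<in> partitions d" and x: "x \<in># q"
      by auto
    have "sum_mset q = x + sum_mset (q - {#x#})"
      using x by (rule sum_mset.remove)
    with q have "q - {#x#} \<in> partitions (d - x)"
      by (auto simp: partitions_def dest: in_diffD)
    moreover have "x \<in> {1..d}"
      using partitions_set_mset[OF q] x by blast
    ultimately show "(\<lambda>(q, x). (x, q - {#x#})) qx \<in> (SIGMA j:{1..d}. partitions (d - j))"
      by (simp add: qx)
    show "(\<lambda>(j, q). (add_mset j q, j)) ((\<lambda>(q, x). (x, q - {#x#})) qx) = qx"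
      using x by (simp add: qx)
    show "(\<lambda>(j, q). F j q) ((\<lambda>(q, x). (x, q - {#x#})) qx) = (\<lambda>(q, x). F x (q - {#x#})) qx"
      by (simp add: qx)
  next
    fix jq assume "jq \<in> (SIGMA j:{1..d}. partitions (d - j))"
    then obtain j q where jq: "jq = (j, q)" and j: "j \<in> {1..d}" and q: "q \<in> partitions (d - j)"
      by auto
    show "(\<lambda>(q, x). (x, q - {#x#})) ((\<lambda>(j, q). (add_mset j q, j)) jq) = jq"
      by (simp add: jq)
    have "add_mset j q \<in> partitions d"
      using j q by (auto simp: partitions_def)
    then show "(\<lambda>(j, q). (add_mset j q, j)) jq \<in> (SIGMA q:partitions d. set_mset q)"
      by (simp add: jq)
  qed
  also have "\<dots> = (\<Sum>j=1..d. \<Sum>q\<in>partitions (d - j). F j q)"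
    by (rule sum.Sigma[symmetric]) (auto simp: finite_partitions)
  finally show ?thesis .
qed

lemma partition_weight_shrink:
  assumes "q \<in> partitions (d - j)"
  shows "partition_weight {1..d} S q = partition_weight {1..d - j} S q"
  using partitions_set_mset[OF assms] by (intro partition_weight_superset[symmetric]) auto

lemma exp_series_coeff_recurrence:
  "of_nat d * exp_series_coeff S d = (\<Sum>j=1..d. of_nat j * S j * exp_series_coeff S (d - j))"
proof -
  have "of_nat d * partition_weight {1..d} S q
      = (\<Sum>x\<in>set_mset q. of_nat x * S x * partition_weight {1..d} S (q - {#x#}))"
    if q: "q \<in> partitions d" for q
  proof -
    have "d = (\<Sum>x\<in>set_mset q. x * count q x)"
      using q sum_mset_eq_sum_count[of "set_mset q" q] by (simp add: partitions_def)
    then have "of_nat d * partition_weight {1..d} S q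
        = (\<Sum>x\<in>set_mset q. of_nat x * (of_nat (count q x) * partition_weight {1..d} S q))"
      by (simp add: sum_distrib_right mult.assoc)
    also have "\<dots> = (\<Sum>x\<in>set_mset q. of_nat x * S x * partition_weight {1..d} S (q - {#x#}))"
      using partitions_set_mset[OF q]
      by (intro sum.cong refl) (auto simp: count_mult_partition_weight mult.assoc)
    finally show ?thesis .
  qed
  then have "of_nat d * exp_series_coeff S d
      = (\<Sum>q\<in>partitions d. \<Sum>x\<in>set_mset q. of_nat x * S x * partition_weight {1..d} S (q - {#x#}))"
    by (simp add: exp_series_coeff_def sum_distrib_left)
  also have "\<dots> = (\<Sum>j=1..d. \<Sum>q\<in>partitions (d - j). of_nat j * S j * partition_weight {1..d} S q)"
    by (rule sum_partitions_remove_part)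
  also have "\<dots> = (\<Sum>j=1..d. of_nat j * S j * exp_series_coeff S (d - j))"
    unfolding exp_series_coeff_def sum_distrib_left
    by (intro sum.cong refl) (metis partition_weight_shrink)
  finally show ?thesis .
qed

lemma partition_weight_has_field_derivative:
  fixes S :: "nat \<Rightarrow> 'a \<Rightarrow> 'a::real_normed_field"
  assumes "finite A" "set_mset q \<subseteq> A" "\<And>x. x \<in> A \<Longrightarrow> (S x has_field_derivative S' x) (at z)"
  shows "((\<lambda>w. partition_weight A (\<lambda>x. S x w) q) has_field_derivative
           (\<Sum>x\<in>set_mset q. S' x * partition_weight A (\<lambda>x. S x z) (q - {#x#}))) (at z)"
proof -
  define f' where "f' x = of_nat (count q x) * S x z ^ (count q x - 1) * S' x / fact (count q x)" for x
  have "((\<lambda>w. S x w ^ count q x / fact (count q x)) has_field_derivative f' x) (at z)" if "x \<in> A" for x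
    unfolding f'_def using assms(3)[OF that] by (auto intro!: derivative_eq_intros)
  then have "((\<lambda>w. partition_weight A (\<lambda>x. S x w) q) has_field_derivative
      (\<Sum>x\<in>A. f' x * (\<Prod>y\<in>A - {x}. S y z ^ count q y / fact (count q y)))) (at z)"
    unfolding partition_weight_def by (rule has_field_derivative_prod)
  also have "(\<Sum>x\<in>A. f' x * (\<Prod>y\<in>A - {x}. S y z ^ count q y / fact (count q y)))
      = (\<Sum>x\<in>set_mset q. S' x * partition_weight A (\<lambda>x. S x z) (q - {#x#}))"
  proof (rule sum.mono_neutral_cong_right)
    fix x assume x: "x \<in># q"
    then obtain c where c: "count q x = Suc c"
      by (metis count_greater_zero_iff not0_implies_Suc not_gr0)
    have "f' x = S' x * (S x z ^ c / fact c)"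
      by (simp add: f'_def c field_simps del: of_nat_Suc)
    then show "f' x * (\<Prod>y\<in>A - {x}. S y z ^ count q y / fact (count q y))
        = S' x * partition_weight A (\<lambda>x. S x z) (q - {#x#})"
      using partition_weight_remove[OF assms(1), of x "\<lambda>x. S x z" q] x assms(2) c by auto
  qed (use assms in \<open>auto simp: f'_def count_eq_zero_iff\<close>)
  finally show ?thesis .
qed

lemma exp_series_coeff_has_field_derivative:
  fixes S :: "nat \<Rightarrow> 'a \<Rightarrow> 'a::real_normed_field"
  assumes "\<And>j. j \<in> {1..d} \<Longrightarrow> (S j has_field_derivative S' j) (at z)"
  shows "((\<lambda>w. exp_series_coeff (\<lambda>j. S j w) d) has_field_derivative
           (\<Sum>j=1..d. S' j * exp_series_coeff (\<lambda>j. S j z) (d - j))) (at z)"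
proof -
  have "((\<lambda>w. exp_series_coeff (\<lambda>j. S j w) d) has_field_derivative
      (\<Sum>q\<in>partitions d. \<Sum>x\<in>set_mset q. S' x * partition_weight {1..d} (\<lambda>j. S j z) (q - {#x#}))) (at z)"
    unfolding exp_series_coeff_def
    by (intro DERIV_sum partition_weight_has_field_derivative assms finite_atLeastAtMost partitions_set_mset)
  also have "(\<Sum>q\<in>partitions d. \<Sum>x\<in>set_mset q. S' x * partition_weight {1..d} (\<lambda>j. S j z) (q - {#x#}))
      = (\<Sum>j=1..d. \<Sum>q\<in>partitions (d - j). S' j * partition_weight {1..d} (\<lambda>j. S j z) q)"
    by (rule sum_partitions_remove_part)
  also have "\<dots> = (\<Sum>j=1..d. S' j * exp_series_coeff (\<lambda>j. S j z) (d - j))"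
    unfolding exp_series_coeff_def sum_distrib_left
    by (intro sum.cong refl) (metis partition_weight_shrink)
  finally show ?thesis .
qed

lemma exp_series_coeff_mult_has_field_derivative:
  fixes S :: "nat \<Rightarrow> 'a \<Rightarrow> 'a::real_normed_field"
  assumes S: "\<And>j. j \<in> {1..d} \<Longrightarrow> (S j has_field_derivative T j + of_nat j * \<mu> * S j z) (at z)"
    and D: "(D has_field_derivative D z * (b - of_nat d * \<mu>)) (at z)"
  defines "E \<equiv> exp_series_coeff (\<lambda>j. S j z)"
  shows "((\<lambda>w. exp_series_coeff (\<lambda>j. S j w) d * D w) has_field_derivative
           D z * (b * E d + (\<Sum>j=1..d. T j * E (d - j)))) (at z)"
proof -
  have "(\<Sum>j=1..d. (T j + of_nat j * \<mu> * S j z) * E (d - j))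
      = (\<Sum>j=1..d. T j * E (d - j)) + \<mu> * (\<Sum>j=1..d. of_nat j * S j z * E (d - j))"
    by (simp add: algebra_simps sum.distrib sum_distrib_left)
  also have "(\<Sum>j=1..d. of_nat j * S j z * E (d - j)) = of_nat d * E d"
    unfolding E_def by (rule exp_series_coeff_recurrence[symmetric])
  finally have E': "(\<Sum>j=1..d. (T j + of_nat j * \<mu> * S j z) * E (d - j))
      = (\<Sum>j=1..d. T j * E (d - j)) + \<mu> * (of_nat d * E d)" .
  from DERIV_mult[OF exp_series_coeff_has_field_derivative[OF S] D]
  have "((\<lambda>w. exp_series_coeff (\<lambda>j. S j w) d * D w) has_field_derivative
      (\<Sum>j=1..d. (T j + of_nat j * \<mu> * S j z) * E (d - j)) * D z + E d * (D z * (b - of_nat d * \<mu>))) (at z)"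
    unfolding E_def by (simp add: mult.commute)
  then show ?thesis
    unfolding E' by (simp add: algebra_simps)
qed

section \<open>The Fuchsian system\<close>

lemma Jnm_ge_1:
  assumes "n < 0" "m dvd j" "j \<ge> 1"
  shows "Jnm n m j \<ge> 1"
  using assms by (auto simp: Jnm_def elim!: dvdE)

lemma of_nat_Jnm:
  assumes "m \<ge> 1" "m dvd j"
  shows "(of_nat (Jnm n m j) :: 'a::field_char_0) = of_int \<bar>n\<bar> * of_nat j / of_nat m"
  using assms by (auto simp: Jnm_def of_nat_mult elim!: dvdE)

lemma log_branch_has_field_derivative:
  fixes L :: "complex \<Rightarrow> complex"
  assumes "L holomorphic_on U" "open U" "z \<in> U" "\<And>w. w \<in> U \<Longrightarrow> exp (L w) = w - c"
  shows "(L has_field_derivative 1 / (z - c)) (at z)"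
proof -
  obtain L' where L': "(L has_field_derivative L') (at z)"
    using assms(1-3) holomorphic_on_open by blast
  have "((\<lambda>w. exp (L w)) has_field_derivative exp (L z) * L') (at z)"
    using L' by (auto intro!: derivative_eq_intros)
  then have "((\<lambda>w. w - c) has_field_derivative exp (L z) * L') (at z)"
    by (rule has_field_derivative_transform_within_open[OF _ assms(2,3)]) (use assms(4) in auto)
  moreover have "((\<lambda>w. w - c) has_field_derivative 1) (at z)"
    by (auto intro!: derivative_eq_intros)
  ultimately have "(z - c) * L' = 1"
    using assms(3,4) DERIV_unique by metis
  moreover have "z - c \<noteq> 0"
    using assms(3,4) exp_not_eq_zero by metis
  ultimately have "L' = 1 / (z - c)"
    by (simp add: field_simps)
  with L' show ?thesis
    by simp
qed

lemma Dmat_has_field_derivative: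
  assumes "\<And>i. i \<in> {1..N} \<Longrightarrow> (L i has_field_derivative 1 / (z - a i)) (at z)"
  shows "((\<lambda>w. Dmat n m N \<theta> L l l w) has_field_derivative
           Dmat n m N \<theta> L l l z * (\<Sum>i=1..N. beta n m \<theta> i l / (z - a i))) (at z)"
proof -
  define f where "f i w = exp (beta n m \<theta> i l * L i w)" for i w
  have "(f i has_field_derivative f i z * (beta n m \<theta> i l / (z - a i))) (at z)" if "i \<in> {1..N}" for i
    unfolding f_def using assms[OF that] by (auto intro!: derivative_eq_intros)
  from has_field_derivative_prod'[where A = "{1..N}" and f = f and z = z, OF _ this]
  have "((\<lambda>w. \<Prod>i\<in>{1..N}. f i w) has_field_derivative
      (\<Prod>i\<in>{1..N}. f i z) * (\<Sum>i\<in>{1..N}. f i z * (beta n m \<theta> i l / (z - a i)) / f i z)) (at z)"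
    by (simp add: f_def)
  then show ?thesis
    by (simp add: Dmat_def f_def)
qed

(* The Taylor series at a nu of prod_(h ~= nu) (w - a h)^(-J|n|/m), in powers of w - a nu. *)
definition cofactor_fps :: "int \<Rightarrow> nat \<Rightarrow> nat \<Rightarrow> (nat \<Rightarrow> complex) \<Rightarrow> nat \<Rightarrow> nat \<Rightarrow> complex fps" where
  "cofactor_fps n m N a J \<nu> = (\<Prod>h\<in>{1..N} - {\<nu>}. neg_binomial_fps (Jnm n m J) (a \<nu> - a h))"

definition Bmat_superdiag :: "int \<Rightarrow> nat \<Rightarrow> nat \<Rightarrow> (nat \<Rightarrow> complex) \<Rightarrow> (nat \<Rightarrow> nat \<Rightarrow> complex)
    \<Rightarrow> nat \<Rightarrow> nat \<Rightarrow> complex" where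
  "Bmat_superdiag n m N a c i j = (if m dvd j then \<Sum>\<nu>=1..N. c j \<nu> * rho n m N a j \<nu> i else 0)"

lemma sum_comps_prodfac:
  "(\<Sum>k\<in>comps ({1..N} - {\<nu>}) s. prodfac n m N a J \<nu> k) = cofactor_fps n m N a J \<nu> $ s"
  by (simp add: cofactor_fps_def fps_prod_nth prodfac_def neg_binomial_fps_def)

lemma sum_comps_prodfac_eq_principal_part:
  assumes "\<nu> \<in> {1..N}" "Jnm n m J \<ge> 1"
  shows "(\<Sum>k\<in>comps {1..N} (Jnm n m J - 1).
            (- 1) ^ k \<nu> / (a \<nu> - w) ^ (k \<nu> + 1) * prodfac n m N a J \<nu> k)
       = - principal_part (Jnm n m J) (cofactor_fps n m N a J \<nu>) (a \<nu>) w"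
proof -
  have "prodfac n m N a J \<nu> (k(\<nu> := b)) = prodfac n m N a J \<nu> k" for k b
    unfolding prodfac_def by (intro prod.cong) auto
  from sum_comps_eq_principal_part[OF _ _ assms(2) this sum_comps_prodfac[symmetric]]
  have "(\<Sum>k\<in>comps (insert \<nu> ({1..N} - {\<nu>})) (Jnm n m J - 1).
            (- 1) ^ k \<nu> / (a \<nu> - w) ^ (k \<nu> + 1) * prodfac n m N a J \<nu> k)
       = - principal_part (Jnm n m J) (cofactor_fps n m N a J \<nu>) (a \<nu>) w"
    by blast
  moreover have "insert \<nu> ({1..N} - {\<nu>}) = {1..N}"
    using assms(1) by blast
  ultimately show ?thesis
    by simp
qed

lemma rho_eq:
  assumes "\<nu> \<in> {1..N}" "Jnm n m J \<ge> 1"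
  shows "rho n m N a J \<nu> i = of_nat m *
    (if i = \<nu> then cofactor_fps n m N a J \<nu> $ Jnm n m J
     else - principal_part (Jnm n m J) (cofactor_fps n m N a J \<nu>) (a \<nu>) (a i))"
  using sum_comps_prodfac_eq_principal_part[OF assms, of a "a i"]
    sum_comps_prodfac[where s = "Jnm n m J" and N = N and \<nu> = \<nu>]
  unfolding rho_def by auto

lemma Sfun_eq:
  assumes "m dvd j" "Jnm n m j \<ge> 1"
  shows "Sfun n m N a c j z = of_nat m ^ 2 / (of_nat j * of_int n) *
    (\<Sum>\<nu>=1..N. c j \<nu> * principal_part (Jnm n m j) (cofactor_fps n m N a j \<nu>) (a \<nu>) z)"
  using sum_comps_prodfac_eq_principal_part[OF _ assms(2)] assms(1)
  by (simp add: Sfun_def sum_negf)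

lemma principal_part_cofactor_has_field_derivative:
  assumes "n < 0" "m \<ge> 1" "m dvd j" "j \<ge> 1" "inj_on a {1..N}" "\<nu> \<in> {1..N}" "z \<notin> a ` {1..N}"
  defines "P \<equiv> principal_part (Jnm n m j) (cofactor_fps n m N a j \<nu>) (a \<nu>)"
  shows "((\<lambda>w. of_nat m ^ 2 / (of_nat j * of_int n) * P w) has_field_derivative
           (\<Sum>i=1..N. rho n m N a j \<nu> i / (z - a i)) + of_nat m * (\<Sum>i=1..N. 1 / (z - a i)) * P z) (at z)"
proof -
  define K where "K = Jnm n m j"
  define Q where "Q = cofactor_fps n m N a j \<nu>"
  define I where "I = {1..N} - {\<nu>}"
  define C :: complex where "C = of_nat m ^ 2 / (of_nat j * of_int n)"
  define u where "u = 1 / (z - a \<nu>)"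
  have K: "K \<ge> 1"
    unfolding K_def using assms(1,3,4) by (rule Jnm_ge_1)
  have "a h \<noteq> a \<nu>" if "h \<in> I" for h
    using that assms(5,6) by (auto simp: I_def dest: inj_onD)
  then have "(P has_field_derivative of_nat K * ((\<Sum>h\<in>I. (P (a h) - P z) / (z - a h)) - (Q $ K + P z) / (z - a \<nu>))) (at z)"
    unfolding P_def Q_def K_def cofactor_fps_def I_def
    by (intro neg_binomial_principal_part_has_field_derivative) (use assms(6,7) in auto)
  then have deriv: "((\<lambda>w. C * P w) has_field_derivative
      C * (of_nat K * ((\<Sum>h\<in>I. (P (a h) - P z) / (z - a h)) - (Q $ K + P z) / (z - a \<nu>)))) (at z)"
    by (rule DERIV_cmult)
  have "of_int \<bar>n\<bar> = - (of_int n :: complex)"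
    using assms(1) by simp
  then have CK: "C * of_nat K = - of_nat m"
    unfolding C_def K_def of_nat_Jnm[OF assms(2,3)] using assms(1,2,4) by (simp add: power2_eq_square)
  have sum_remove: "(\<Sum>i=1..N. f i) = f \<nu> + (\<Sum>h\<in>I. f h)" for f :: "nat \<Rightarrow> complex"
    unfolding I_def using assms(6) by (simp add: sum.remove)
  have "rho n m N a j \<nu> \<nu> = of_nat m * Q $ K"
    using rho_eq[OF assms(6)] K by (simp add: K_def Q_def)
  moreover have "(\<Sum>h\<in>I. rho n m N a j \<nu> h / (z - a h)) = - of_nat m * (\<Sum>h\<in>I. P (a h) / (z - a h))"
    using rho_eq[OF assms(6)] K
    by (simp add: sum_distrib_left I_def K_def P_def Q_def)
  ultimately have rho_sum: "(\<Sum>i=1..N. rho n m N a j \<nu> i / (z - a i))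
      = of_nat m * Q $ K * u - of_nat m * (\<Sum>h\<in>I. P (a h) / (z - a h))"
    unfolding sum_remove by (simp add: u_def)
  have pole_sum: "(\<Sum>i=1..N. 1 / (z - a i)) = u + (\<Sum>h\<in>I. 1 / (z - a h))"
    unfolding sum_remove u_def ..
  have split: "(\<Sum>h\<in>I. (P (a h) - P z) / (z - a h)) = (\<Sum>h\<in>I. P (a h) / (z - a h)) - P z * (\<Sum>h\<in>I. 1 / (z - a h))"
    by (simp add: diff_divide_distrib sum_subtractf sum_distrib_left)
  have residue: "(Q $ K + P z) / (z - a \<nu>) = Q $ K * u + P z * u"
    by (simp add: u_def add_divide_distrib)
  have "C * (of_nat K * ((\<Sum>h\<in>I. (P (a h) - P z) / (z - a h)) - (Q $ K + P z) / (z - a \<nu>)))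
      = (\<Sum>i=1..N. rho n m N a j \<nu> i / (z - a i)) + of_nat m * (\<Sum>i=1..N. 1 / (z - a i)) * P z"
    unfolding rho_sum pole_sum mult.assoc[symmetric] CK split residue by (simp add: algebra_simps)
  then show ?thesis
    using deriv unfolding C_def by simp
qed

lemma Sfun_has_field_derivative:
  assumes "n < 0" "m \<ge> 1" "j \<ge> 1" "inj_on a {1..N}" "z \<notin> a ` {1..N}"
  shows "(Sfun n m N a c j has_field_derivative
           (\<Sum>i=1..N. Bmat_superdiag n m N a c i j / (z - a i))
           + of_nat j * (of_int n / of_nat m * (\<Sum>i=1..N. 1 / (z - a i))) * Sfun n m N a c j z) (at z)"
proof (cases "m dvd j")
  case False
  then have "Sfun n m N a c j = (\<lambda>_. 0)"
    by (simp add: Sfun_def fun_eq_iff)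
  with False show ?thesis
    by (simp add: Bmat_superdiag_def)
next
  case True
  define C :: complex where "C = of_nat m ^ 2 / (of_nat j * of_int n)"
  define P where "P \<nu> = principal_part (Jnm n m j) (cofactor_fps n m N a j \<nu>) (a \<nu>)" for \<nu>
  define \<sigma> where "\<sigma> = (\<Sum>i=1..N. 1 / (z - a i))"
  have S: "Sfun n m N a c j = (\<lambda>w. \<Sum>\<nu>=1..N. c j \<nu> * (C * P \<nu> w))"
    using Sfun_eq[OF True Jnm_ge_1[OF assms(1) True assms(3)]]
    by (simp add: fun_eq_iff C_def P_def sum_distrib_left mult_ac)
  have "(Sfun n m N a c j has_field_derivative
      (\<Sum>\<nu>=1..N. c j \<nu> * ((\<Sum>i=1..N. rho n m N a j \<nu> i / (z - a i)) + of_nat m * \<sigma> * P \<nu> z))) (at z)"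
    unfolding S \<sigma>_def C_def P_def
    by (intro DERIV_sum DERIV_cmult principal_part_cofactor_has_field_derivative assms True) auto
  moreover have "(\<Sum>\<nu>=1..N. c j \<nu> * (\<Sum>i=1..N. rho n m N a j \<nu> i / (z - a i)))
      = (\<Sum>i=1..N. Bmat_superdiag n m N a c i j / (z - a i))"
    using True by (simp add: Bmat_superdiag_def sum_distrib_left sum_divide_distrib mult.assoc) (rule sum.swap)
  moreover have "of_nat j * (of_int n / of_nat m) * C = of_nat m"
    using assms(1,2,3) by (simp add: C_def power2_eq_square)
  moreover have "of_nat j * (of_int n / of_nat m * \<sigma>) * Sfun n m N a c j z
      = (\<Sum>\<nu>=1..N. c j \<nu> * ((of_nat j * (of_int n / of_nat m) * C) * \<sigma> * P \<nu> z))"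
    by (simp add: S sum_distrib_left mult_ac)
  ultimately show ?thesis
    by (simp add: distrib_left sum.distrib \<sigma>_def)
qed

lemma Mmat_eq:
  "Mmat n m N a c k l w = (if k \<le> l then exp_series_coeff (\<lambda>j. Sfun n m N a c j w) (l - k) else 0)"
  by (simp add: Mmat_def exp_series_coeff_def partition_weight_def partitions_0)

lemma Phi_eq:
  assumes "l \<in> {1..p}"
  shows "Phi n p m N a \<theta> c L k l w = Mmat n m N a c k l w * Dmat n m N \<theta> L l l w"
  unfolding Phi_def using assms by (simp add: Dmat_def if_distrib cong: if_cong)

lemma Bmat_eq:
  "Bmat n m N a \<theta> c i k l
     = (if k = l then beta n m \<theta> i k else if k < l then Bmat_superdiag n m N a c i (l - k) else 0)"
  by (auto simp: Bmat_def Bmat_superdiag_def)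

lemma Bmat_Mmat_sum:
  fixes n :: int and m N :: nat and a :: "nat \<Rightarrow> complex" and c :: "nat \<Rightarrow> nat \<Rightarrow> complex"
    and z :: complex
  assumes "1 \<le> k" "k \<le> l" "l \<le> p"
  defines "E \<equiv> exp_series_coeff (\<lambda>j. Sfun n m N a c j z)"
  shows "(\<Sum>r=1..p. Bmat n m N a \<theta> c i k r * Mmat n m N a c r l z)
       = beta n m \<theta> i k * E (l - k) + (\<Sum>j=1..l - k. Bmat_superdiag n m N a c i j * E (l - k - j))"
proof -
  define f where "f r = Bmat n m N a \<theta> c i k r * Mmat n m N a c r l z" for r
  have "(\<Sum>r=1..p. f r) = (\<Sum>r=k..l. f r)"
    by (rule sum.mono_neutral_right) (use assms in \<open>auto simp: f_def Bmat_eq Mmat_eq\<close>)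
  also have "\<dots> = f k + (\<Sum>j=1..l - k. f (j + k))"
    using assms(2) sum.shift_bounds_cl_nat_ivl[of f 1 k "l - k"] by (simp add: sum.atLeast_Suc_atMost)
  also have "f k = beta n m \<theta> i k * E (l - k)"
    using assms(2) by (simp add: f_def Bmat_eq Mmat_eq E_def)
  also have "(\<Sum>j=1..l - k. f (j + k)) = (\<Sum>j=1..l - k. Bmat_superdiag n m N a c i j * E (l - k - j))"
    by (intro sum.cong refl) (auto simp: f_def Bmat_eq Mmat_eq E_def add.commute)
  finally show ?thesis
    by (simp add: f_def)
qed

lemma Bmat_Phi_sum:
  fixes n :: int and m N :: nat and a :: "nat \<Rightarrow> complex" and c :: "nat \<Rightarrow> nat \<Rightarrow> complex"
    and z :: complex
  assumes "1 \<le> k" "k \<le> l" "l \<le> p"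
  defines "E \<equiv> exp_series_coeff (\<lambda>j. Sfun n m N a c j z)"
  shows "(\<Sum>i=1..N. \<Sum>r=1..p. Bmat n m N a \<theta> c i k r / (z - a i) * Phi n p m N a \<theta> c L r l z)
       = Dmat n m N \<theta> L l l z * ((\<Sum>i=1..N. beta n m \<theta> i k / (z - a i)) * E (l - k)
           + (\<Sum>j=1..l - k. (\<Sum>i=1..N. Bmat_superdiag n m N a c i j / (z - a i)) * E (l - k - j)))"
proof -
  define D where "D = Dmat n m N \<theta> L l l z"
  have "(\<Sum>r=1..p. Bmat n m N a \<theta> c i k r / (z - a i) * Phi n p m N a \<theta> c L r l z)
      = D * (beta n m \<theta> i k / (z - a i) * E (l - k)
          + (\<Sum>j=1..l - k. Bmat_superdiag n m N a c i j / (z - a i) * E (l - k - j)))" for i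
  proof -
    have "(\<Sum>r=1..p. Bmat n m N a \<theta> c i k r / (z - a i) * Phi n p m N a \<theta> c L r l z)
        = D / (z - a i) * (\<Sum>r=1..p. Bmat n m N a \<theta> c i k r * Mmat n m N a c r l z)"
      using assms(1-3) by (simp add: Phi_eq D_def sum_distrib_left mult_ac)
    then show ?thesis
      unfolding Bmat_Mmat_sum[OF assms(1-3)] E_def
      by (simp add: sum_distrib_left sum_divide_distrib algebra_simps)
  qed
  then have "(\<Sum>i=1..N. \<Sum>r=1..p. Bmat n m N a \<theta> c i k r / (z - a i) * Phi n p m N a \<theta> c L r l z)
      = D * ((\<Sum>i=1..N. beta n m \<theta> i k / (z - a i)) * E (l - k)
          + (\<Sum>i=1..N. \<Sum>j=1..l - k. Bmat_superdiag n m N a c i j / (z - a i) * E (l - k - j)))"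
    by (simp only: sum_distrib_left[symmetric] sum.distrib sum_distrib_right)
  also have "(\<Sum>i=1..N. \<Sum>j=1..l - k. Bmat_superdiag n m N a c i j / (z - a i) * E (l - k - j))
      = (\<Sum>j=1..l - k. (\<Sum>i=1..N. Bmat_superdiag n m N a c i j / (z - a i)) * E (l - k - j))"
    by (subst sum.swap) (simp add: sum_distrib_right)
  finally show ?thesis
    unfolding D_def .
qed

lemma beta_diff:
  assumes "1 \<le> k" "k \<le> l"
  shows "beta n m \<theta> i l = beta n m \<theta> i k - of_nat (l - k) * (of_int n / of_nat m)"
proof -
  have "l - 1 = (k - 1) + (l - k)"
    using assms by simp
  then show ?thesis
    unfolding beta_def by (simp add: distrib_right add_divide_distrib)
qed

lemma Phi_has_field_derivative_upper:
  assumes "n < 0" "m \<ge> 1" "inj_on a {1..N}" "z \<notin> a ` {1..N}"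
    and L': "\<And>i. i \<in> {1..N} \<Longrightarrow> (L i has_field_derivative 1 / (z - a i)) (at z)"
    and kl: "1 \<le> k" "k \<le> l" "l \<le> p"
  shows "((\<lambda>w. Phi n p m N a \<theta> c L k l w) has_field_derivative
           (\<Sum>i=1..N. \<Sum>r=1..p. Bmat n m N a \<theta> c i k r / (z - a i) * Phi n p m N a \<theta> c L r l z)) (at z)"
proof -
  define \<mu> where "\<mu> = of_int n / of_nat m * (\<Sum>i=1..N. 1 / (z - a i))"
  have S: "(Sfun n m N a c j has_field_derivative
      (\<Sum>i=1..N. Bmat_superdiag n m N a c i j / (z - a i)) + of_nat j * \<mu> * Sfun n m N a c j z) (at z)"
    if "j \<in> {1..l - k}" for j
    using that Sfun_has_field_derivative[OF assms(1,2) _ assms(3,4), of j c] by (simp add: \<mu>_def)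
  have beta_sum: "(\<Sum>i=1..N. beta n m \<theta> i l / (z - a i))
      = (\<Sum>i=1..N. beta n m \<theta> i k / (z - a i)) - of_nat (l - k) * \<mu>"
    by (simp add: beta_diff[OF kl(1,2)] \<mu>_def diff_divide_distrib sum_subtractf sum_distrib_left)
  have "((\<lambda>w. Dmat n m N \<theta> L l l w) has_field_derivative
      Dmat n m N \<theta> L l l z * (\<Sum>i=1..N. beta n m \<theta> i l / (z - a i))) (at z)"
    by (rule Dmat_has_field_derivative) (rule L')
  then have D: "((\<lambda>w. Dmat n m N \<theta> L l l w) has_field_derivative
      Dmat n m N \<theta> L l l z * ((\<Sum>i=1..N. beta n m \<theta> i k / (z - a i)) - of_nat (l - k) * \<mu>)) (at z)"
    unfolding beta_sum .
  have Phi_factor: "(\<lambda>w. Phi n p m N a \<theta> c L k l w)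
      = (\<lambda>w. exp_series_coeff (\<lambda>j. Sfun n m N a c j w) (l - k) * Dmat n m N \<theta> L l l w)"
    using kl by (simp add: fun_eq_iff Phi_eq Mmat_eq)
  show ?thesis
    unfolding Phi_factor Bmat_Phi_sum[OF kl] by (rule exp_series_coeff_mult_has_field_derivative[OF S D])
qed

lemma Phi_has_field_derivative_lower:
  assumes "l \<in> {1..p}" "l < k"
  shows "((\<lambda>w. Phi n p m N a \<theta> c L k l w) has_field_derivative
           (\<Sum>i=1..N. \<Sum>r=1..p. Bmat n m N a \<theta> c i k r / (z - a i) * Phi n p m N a \<theta> c L r l z)) (at z)"
proof -
  have Phi_zero: "(\<lambda>w. Phi n p m N a \<theta> c L k l w) = (\<lambda>_. 0)"
    using assms by (simp add: fun_eq_iff Phi_eq Mmat_eq)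
  have "Bmat n m N a \<theta> c i k r / (z - a i) * Phi n p m N a \<theta> c L r l z = 0" for i r
  proof (cases "k \<le> r")
    case True
    with assms show ?thesis
      by (simp add: Phi_eq Mmat_eq)
  next
    case False
    then show ?thesis
      by (simp add: Bmat_eq)
  qed
  then have "(\<Sum>i=1..N. \<Sum>r=1..p. Bmat n m N a \<theta> c i k r / (z - a i) * Phi n p m N a \<theta> c L r l z) = 0"
    by (intro sum.neutral ballI)
  then show ?thesis
    unfolding Phi_zero by simp
qed

theorem corollary2:
  fixes n :: int and p m N :: nat
    and a \<theta> :: "nat \<Rightarrow> complex" and c :: "nat \<Rightarrow> nat \<Rightarrow> complex"
    and U :: "complex set" and L :: "nat \<Rightarrow> complex \<Rightarrow> complex"
  assumes "n < 0" and "p \<ge> 1" and "m \<ge> 1" and "N \<ge> 1"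
    and "gcd n (int m) = 1"
    and "inj_on a {1..N}"
    and "open U" and "\<forall>i\<in>{1..N}. a i \<notin> U"
    and "\<forall>i\<in>{1..N}. L i holomorphic_on U \<and> (\<forall>z\<in>U. exp (L i z) = z - a i)"
  shows "\<forall>z\<in>U. \<forall>k\<in>{1..p}. \<forall>l\<in>{1..p}.
           ((\<lambda>w. Phi n p m N a \<theta> c L k l w) has_field_derivative
              (\<Sum>i=1..N. \<Sum>r=1..p. Bmat n m N a \<theta> c i k r / (z - a i) * Phi n p m N a \<theta> c L r l z))
           (at z)"
proof (intro ballI)
  fix z k l assume z: "z \<in> U" and k: "k \<in> {1..p}" and l: "l \<in> {1..p}"
  have z_notin: "z \<notin> a ` {1..N}"
    using assms(8) z by auto
  have L': "(L i has_field_derivative 1 / (z - a i)) (at z)" if "i \<in> {1..N}" for i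
    using assms(7,9) that z by (intro log_branch_has_field_derivative[of "L i" U]) auto
  show "((\<lambda>w. Phi n p m N a \<theta> c L k l w) has_field_derivative
      (\<Sum>i=1..N. \<Sum>r=1..p. Bmat n m N a \<theta> c i k r / (z - a i) * Phi n p m N a \<theta> c L r l z)) (at z)"
  proof (cases "k \<le> l")
    case True
    show ?thesis
      by (rule Phi_has_field_derivative_upper[OF assms(1,3,6) z_notin L']) (use k l True in auto)
  next
    case False
    show ?thesis
      by (rule Phi_has_field_derivative_lower) (use l False in auto)
  qed
qed

end
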